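(* The category $\mathbb S^{\mathrm{m},\mathbb P}_r$ is $\mathbf{Ord}$-enriched, i.e. its sequential composition $;$ is monotone in both arguments with respect to the orders on hom-sets. Moreover, the sum $\oplus$ and the trace operator $\mathrm{tr}$ are monotone.
   Context: Notation: $[k]=\{1,\dots,k\}$; $T(X)=X+\mathbb R\times X+\{\exists^*,\forall^*\}$; diagrammatic composition. $\mathbb S^{\mathrm{m},\mathbb P}_r$ has natural numbers as objects; an arrow $f:m\to n$ is a function $f:[m]\to T([n])$ such that for all $i\ne j$ in $[m]$, $f(i)\notin[n]$ or $f(j)\notin\{f(i)\}\cup\mathbb R\times\{f(i)\}$. On $T([n])$ let $\le$ be the least order with $(r_1,i)\le(r_2,i)$ whenever $r_1\ge r_2$ and $i\in[n]$, $\exists^*\le z$ and $z\le\forall^*$ for all $z\in T([n])$; hom-sets are ordered pointwise ($f\le g$ iff $f(i)\le g(i)$ for all $i$). Operations: $(f;g)(i)=f(i)$ if $f(i)\in\{\exists^*,\forall^*\}$; $g(j)$ if $f(i)=j\in[l]$; $g(j)$ if $f(i)=(r,j)$ and $g(j)\in\{\exists^*,\forall^*\}$; $(r,k)$ if $f(i)=(r,j)$, $g(j)=k$; $(r+r',k)$ if $f(i)=(r,j)$, $g(j)=(r',k)$. $(f\oplus g)(i)=f(i)$ ($i\le m$), $(f\oplus g)(m+i)$ is $g(i)$ with its index $j$ (if any) shifted to $n+j$ (for $f:m\to n$). Trace of $f:l+m\to l+n$ at $i\in[m]$: $v_0=l+i$; if $j=0$ or $v_j\in[l]$ then $v_{j+1}=f(v_j)$;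 if $v_j=(r,k)$, $k\in[l]$, then $v_{j+1}=f(k)$; otherwise stop at $v_j$. If finite $(v_0,..,v_K)$ and $S$ is the sum of first components of $v_j\in\mathbb R\times[l+n]$, $1\le j\le K$: value $v_K$ if $v_K\in\{\exists^*,\forall^*\}$; $k$ if $v_K=l+k$ and $v_j\in[l]$ for $1\le j<K$; $(S,k)$ if $v_K=l+k$ and some earlier $v_j\in\mathbb R\times[l]$; $(S,k)$ if $v_K=(r,l+k)$. If infinite, with $w'_1,w'_2,..$ the first components of the (infinitely many) entries in $\mathbb R\times[l]$: $\exists^*$ if $\liminf_N\frac1N\sum_{t\le N}w'_t\ge0$, else $\forall^*$. *)

theory Defs
  imports "HOL-Analysis.Analysis"
begin

text \<open>Elements of T([n]) = [n] + R x [n] + {Ex*, All*}; indices are natural numbers,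
  membership in [n] = {1..n} is imposed by the predicate inT.\<close>
datatype tval = Var nat | Wt real nat | ExS | AllS

definition inT :: "nat \<Rightarrow> tval \<Rightarrow> bool" where
  "inT n v = (case v of Var k \<Rightarrow> k \<in> {1..n} | Wt r k \<Rightarrow> k \<in> {1..n} | _ \<Rightarrow> True)"

text \<open>Arrows m -> n: functions on [m] (values outside [m] are irrelevant) into T([n])
  satisfying the linearity side condition.\<close>
definition arrow :: "nat \<Rightarrow> nat \<Rightarrow> (nat \<Rightarrow> tval) \<Rightarrow> bool" where
  "arrow m n f \<longleftrightarrow>
     (\<forall>i\<in>{1..m}. inT n (f i)) \<and>
     (\<forall>i\<in>{1..m}. \<forall>j\<in>{1..m}. i \<noteq> j \<longrightarrow>
        (\<forall>k. f i = Var k \<longrightarrow> f j \<noteq> Var k \<and> (\<forall>r. f j \<noteq> Wt r k)))"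

definition tle :: "tval \<Rightarrow> tval \<Rightarrow> bool" where
  "tle x y \<longleftrightarrow> x = y \<or> x = ExS \<or> y = AllS \<or>
     (\<exists>r1 r2 i. x = Wt r1 i \<and> y = Wt r2 i \<and> r1 \<ge> r2)"

definition hle :: "nat \<Rightarrow> (nat \<Rightarrow> tval) \<Rightarrow> (nat \<Rightarrow> tval) \<Rightarrow> bool" where
  "hle m f g \<longleftrightarrow> (\<forall>i\<in>{1..m}. tle (f i) (g i))"

definition seqc :: "(nat \<Rightarrow> tval) \<Rightarrow> (nat \<Rightarrow> tval) \<Rightarrow> (nat \<Rightarrow> tval)" where
  "seqc f g = (\<lambda>i. case f i of
       ExS \<Rightarrow> ExS
     | AllS \<Rightarrow> AllS
     | Var j \<Rightarrow> g j
     | Wt r j \<Rightarrow> (case g j of ExS \<Rightarrow> ExS | AllS \<Rightarrow> AllS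
                   | Var k \<Rightarrow> Wt r k | Wt r' k \<Rightarrow> Wt (r + r') k))"

definition shiftT :: "nat \<Rightarrow> tval \<Rightarrow> tval" where
  "shiftT n v = (case v of Var j \<Rightarrow> Var (n + j) | Wt r j \<Rightarrow> Wt r (n + j) | x \<Rightarrow> x)"

definition osum :: "nat \<Rightarrow> nat \<Rightarrow> (nat \<Rightarrow> tval) \<Rightarrow> (nat \<Rightarrow> tval) \<Rightarrow> (nat \<Rightarrow> tval)" where
  "osum m n f g = (\<lambda>i. if i \<le> m then f i else shiftT n (g (i - m)))"

definition contL :: "nat \<Rightarrow> tval \<Rightarrow> bool" where
  "contL l v = (case v of Var k \<Rightarrow> k \<in> {1..l} | Wt r k \<Rightarrow> k \<in> {1..l} | _ \<Rightarrow> False)"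

definition idxT :: "tval \<Rightarrow> nat" where
  "idxT v = (case v of Var k \<Rightarrow> k | Wt r k \<Rightarrow> k | _ \<Rightarrow> 0)"

definition wtT :: "tval \<Rightarrow> real" where
  "wtT v = (case v of Wt r k \<Rightarrow> r | _ \<Rightarrow> 0)"

definition isVar :: "tval \<Rightarrow> bool" where
  "isVar v = (case v of Var k \<Rightarrow> True | _ \<Rightarrow> False)"

definition isWt :: "tval \<Rightarrow> bool" where
  "isWt v = (case v of Wt r k \<Rightarrow> True | _ \<Rightarrow> False)"

text \<open>The trace sequence v_0, v_1, ... for f : l+m -> l+n at i in [m];
  v_0 = l+i is encoded as Var (l+i); once the sequence stops it stays constant.\<close>
primrec tseq :: "nat \<Rightarrow> (nat \<Rightarrow> tval) \<Rightarrow> nat \<Rightarrow> nat \<Rightarrow> tval" where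
  "tseq l f i 0 = Var (l + i)"
| "tseq l f i (Suc j) =
     (if j = 0 then f (l + i)
      else if contL l (tseq l f i j) then f (idxT (tseq l f i j))
      else tseq l f i j)"

definition trace_at :: "nat \<Rightarrow> (nat \<Rightarrow> tval) \<Rightarrow> nat \<Rightarrow> tval" where
  "trace_at l f i =
    (let v = tseq l f i in
     if \<exists>j\<ge>1. \<not> contL l (v j) then
       (let K = (LEAST j. j \<ge> 1 \<and> \<not> contL l (v j));
            S = (\<Sum>j\<in>{1..K}. wtT (v j)) in
        case v K of
          ExS \<Rightarrow> ExS
        | AllS \<Rightarrow> AllS
        | Var k \<Rightarrow> (if \<forall>j\<in>{1..<K}. isVar (v j) then Var (k - l) else Wt S (k - l))
        | Wt r k \<Rightarrow> Wt S (k - l))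
     else
       (let w' = (\<lambda>t. wtT (v (enumerate {j. j \<ge> 1 \<and> isWt (v j)} t))) in
        if Liminf sequentially (\<lambda>N. ereal ((\<Sum>t<N. w' t) / real N)) \<ge> 0
        then ExS else AllS))"

definition trace_op :: "nat \<Rightarrow> (nat \<Rightarrow> tval) \<Rightarrow> (nat \<Rightarrow> tval)" where
  "trace_op l f = (\<lambda>i. trace_at l f i)"

end

theory Submission
  imports Defs
begin

text \<open>Composition and sum act pointwise, and the order on T([n]) is compatible with adding
  weights and shifting indices, so their monotonicity is a case analysis. For the trace,
  compare the two trace walks of f \<le> g step by step. As long as corresponding entries differ
  at most by a larger weight on the same index, the walks continue in lockstep, so the finite
  weight sums, and in the non-terminating case the running means of the weights, are ordered
  the right way. At the first step where the entries are related otherwise, the order forces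
  the f-walk to be at \<exists>* or the g-walk at \<forall>*; both end the walk with that value.\<close>

definition shape_le :: "tval \<Rightarrow> tval \<Rightarrow> bool" where
  "shape_le x y \<longleftrightarrow> x = y \<or> (\<exists>r1 r2 k. x = Wt r1 k \<and> y = Wt r2 k \<and> r1 \<ge> r2)"

lemma tle_refl [simp]: "tle x x"
  and tle_ExS [simp]: "tle ExS y"
  and tle_AllS [simp]: "tle x AllS"
  by (simp_all add: tle_def)

lemma shape_le_imp_tle: "shape_le x y \<Longrightarrow> tle x y"
  by (auto simp: shape_le_def tle_def)

lemma tle_cases: "tle x y \<Longrightarrow> shape_le x y \<or> x = ExS \<or> y = AllS"
  by (auto simp: shape_le_def tle_def)

lemma shape_le_contL_iff: "shape_le x y \<Longrightarrow> contL l x \<longleftrightarrow> contL l y"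
  and shape_le_isVar_iff: "shape_le x y \<Longrightarrow> isVar x \<longleftrightarrow> isVar y"
  and shape_le_isWt_iff: "shape_le x y \<Longrightarrow> isWt x \<longleftrightarrow> isWt y"
  and shape_le_wtT_ge: "shape_le x y \<Longrightarrow> wtT y \<le> wtT x"
  by (auto simp: shape_le_def contL_def isVar_def isWt_def wtT_def)

lemma contL_idxT: "contL l x \<Longrightarrow> idxT x \<in> {1..l}"
  by (cases x) (auto simp: contL_def idxT_def)

definition add_wt :: "real \<Rightarrow> tval \<Rightarrow> tval" where
  "add_wt r y = (case y of ExS \<Rightarrow> ExS | AllS \<Rightarrow> AllS | Var k \<Rightarrow> Wt r k | Wt r' k \<Rightarrow> Wt (r + r') k)"

definition seq_val :: "tval \<Rightarrow> (nat \<Rightarrow> tval) \<Rightarrow> tval" where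
  "seq_val x g = (case x of ExS \<Rightarrow> ExS | AllS \<Rightarrow> AllS | Var j \<Rightarrow> g j | Wt r j \<Rightarrow> add_wt r (g j))"

lemma seqc_eq_seq_val: "seqc f g i = seq_val (f i) g"
  by (cases "f i") (simp_all add: seqc_def seq_val_def add_wt_def)

lemma add_wt_mono: "tle y y' \<Longrightarrow> r' \<le> r \<Longrightarrow> tle (add_wt r y) (add_wt r' y')"
  by (drule tle_cases) (auto simp: shape_le_def add_wt_def tle_def split: tval.splits)

lemma seq_val_mono:
  assumes x: "inT l x" and xx': "tle x x'" and gg': "hle l g g'"
  shows "tle (seq_val x g) (seq_val x' g')"
proof -
  have "tle (g j) (g' j)" if "x = Var j \<or> (\<exists>r. x = Wt r j)" for j
    using that x gg' by (auto simp: inT_def hle_def)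
  then show ?thesis
    using tle_cases[OF xx'] add_wt_mono
    by (cases x) (auto simp: seq_val_def shape_le_def)
qed

lemma seqc_mono:
  assumes "arrow m l f" "hle m f f'" "hle l g g'"
  shows "hle m (seqc f g) (seqc f' g')"
  using assms seq_val_mono by (auto simp: hle_def arrow_def seqc_eq_seq_val)

lemma tle_shiftT: "tle x y \<Longrightarrow> tle (shiftT n x) (shiftT n y)"
  by (auto simp: tle_def shiftT_def)

lemma osum_mono:
  assumes "hle m f f'" "hle m' g g'"
  shows "hle (m + m') (osum m n f g) (osum m n f' g')"
  unfolding hle_def
proof
  fix i assume i: "i \<in> {1..m + m'}"
  show "tle (osum m n f g i) (osum m n f' g' i)"
  proof (cases "i \<le> m")
    case True
    then show ?thesis using assms(1) i by (simp add: osum_def hle_def)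
  next
    case False
    then have "i - m \<in> {1..m'}" using i by auto
    then show ?thesis using False assms(2) tle_shiftT by (simp add: osum_def hle_def)
  qed
qed

definition finite_walk_value :: "nat \<Rightarrow> nat \<Rightarrow> (nat \<Rightarrow> tval) \<Rightarrow> tval" where
  "finite_walk_value l K v =
    (let S = (\<Sum>j\<in>{1..K}. wtT (v j)) in
     case v K of
       ExS \<Rightarrow> ExS
     | AllS \<Rightarrow> AllS
     | Var k \<Rightarrow> (if \<forall>j\<in>{1..<K}. isVar (v j) then Var (k - l) else Wt S (k - l))
     | Wt r k \<Rightarrow> Wt S (k - l))"

definition infinite_walk_value :: "(nat \<Rightarrow> tval) \<Rightarrow> tval" where
  "infinite_walk_value v =
    (let w' = (\<lambda>t. wtT (v (enumerate {j. j \<ge> 1 \<and> isWt (v j)} t))) in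
     if Liminf sequentially (\<lambda>N. ereal ((\<Sum>t<N. w' t) / real N)) \<ge> 0 then ExS else AllS)"

definition trace_of_seq :: "nat \<Rightarrow> (nat \<Rightarrow> tval) \<Rightarrow> tval" where
  "trace_of_seq l v =
    (if \<exists>j\<ge>1. \<not> contL l (v j)
     then finite_walk_value l (LEAST j. j \<ge> 1 \<and> \<not> contL l (v j)) v
     else infinite_walk_value v)"

lemma trace_at_eq_trace_of_seq: "trace_at l f i = trace_of_seq l (tseq l f i)"
  unfolding trace_at_def trace_of_seq_def finite_walk_value_def infinite_walk_value_def Let_def ..

lemma Liminf_running_mean_mono:
  fixes w w' :: "nat \<Rightarrow> real"
  assumes "\<And>t. w' t \<le> w t"
  shows "Liminf sequentially (\<lambda>N. ereal ((\<Sum>t<N. w' t) / real N))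
       \<le> Liminf sequentially (\<lambda>N. ereal ((\<Sum>t<N. w t) / real N))"
proof (rule Liminf_mono, intro always_eventually allI)
  fix N
  have "(\<Sum>t<N. w' t) \<le> (\<Sum>t<N. w t)" by (rule sum_mono) (use assms in blast)
  then show "ereal ((\<Sum>t<N. w' t) / real N) \<le> ereal ((\<Sum>t<N. w t) / real N)"
    by (simp add: divide_right_mono)
qed

lemma finite_walk_value_mono:
  assumes vu: "\<And>j. shape_le (v j) (u j)"
  shows "tle (finite_walk_value l K v) (finite_walk_value l K u)"
proof -
  have "(\<Sum>j\<in>{1..K}. wtT (u j)) \<le> (\<Sum>j\<in>{1..K}. wtT (v j))"
    by (rule sum_mono) (rule shape_le_wtT_ge[OF vu])
  moreover have "(\<forall>j\<in>{1..<K}. isVar (v j)) \<longleftrightarrow> (\<forall>j\<in>{1..<K}. isVar (u j))"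
    using shape_le_isVar_iff[OF vu] by blast
  ultimately show ?thesis
    using vu[of K] unfolding finite_walk_value_def Let_def shape_le_def
    by (cases "u K") (auto simp: tle_def)
qed

lemma infinite_walk_value_mono:
  assumes vu: "\<And>j. shape_le (v j) (u j)"
  shows "tle (infinite_walk_value v) (infinite_walk_value u)"
proof -
  define E where "E = {j. j \<ge> 1 \<and> isWt (v j)}"
  have "{j. j \<ge> 1 \<and> isWt (u j)} = E"
    unfolding E_def using shape_le_isWt_iff[OF vu] by blast
  moreover have "Liminf sequentially (\<lambda>N. ereal ((\<Sum>t<N. wtT (u (enumerate E t))) / real N))
      \<le> Liminf sequentially (\<lambda>N. ereal ((\<Sum>t<N. wtT (v (enumerate E t))) / real N))"
    by (rule Liminf_running_mean_mono) (rule shape_le_wtT_ge[OF vu])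
  ultimately show ?thesis
    unfolding infinite_walk_value_def E_def[symmetric] Let_def by (auto simp: tle_def)
qed

lemma trace_of_seq_mono:
  assumes vu: "\<And>j. shape_le (v j) (u j)"
  shows "tle (trace_of_seq l v) (trace_of_seq l u)"
proof -
  have "contL l (v j) \<longleftrightarrow> contL l (u j)" for j
    using shape_le_contL_iff[OF vu] .
  then show ?thesis
    unfolding trace_of_seq_def
    using finite_walk_value_mono[of v u, OF vu] infinite_walk_value_mono[of v u, OF vu] by auto
qed

lemma trace_of_seq_extremal:
  assumes "1 \<le> K" "v K \<in> {ExS, AllS}" "\<And>j. 1 \<le> j \<Longrightarrow> j < K \<Longrightarrow> contL l (v j)"
  shows "trace_of_seq l v = v K"
proof -
  have stop: "\<not> contL l (v K)" using assms(2) by (auto simp: contL_def)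
  have "(LEAST j. j \<ge> 1 \<and> \<not> contL l (v j)) = K"
    by (rule Least_equality) (use assms(1,3) stop in \<open>auto simp: not_less[symmetric]\<close>)
  then show ?thesis
    using assms(1,2) stop by (auto simp: trace_of_seq_def finite_walk_value_def)
qed

lemma tseq_stays:
  assumes "1 \<le> j" "\<not> contL l (tseq l f i j)" "j \<le> k"
  shows "tseq l f i k = tseq l f i j"
proof -
  have "tseq l f i (j + d) = tseq l f i j" for d
    using assms(1,2) by (induction d) auto
  then show ?thesis using assms(3) le_Suc_ex by blast
qed

lemma tseq_contL_before_divergence:
  assumes j: "1 \<le> j" "j < K"
    and related: "shape_le (tseq l f i j) (tseq l g i j)"
    and diverged: "\<not> shape_le (tseq l f i K) (tseq l g i K)"
  shows "contL l (tseq l f i j)"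
proof (rule ccontr)
  assume "\<not> contL l (tseq l f i j)"
  then have "\<not> contL l (tseq l g i j)"
    using shape_le_contL_iff[OF related] by simp
  \<comment> \<open>both walks have stopped, so they are still related at K\<close>
  then show False
    using tseq_stays[of j l _ i K] j related diverged \<open>\<not> contL l (tseq l f i j)\<close> by simp
qed

lemma tle_tseq_Suc:
  assumes fg: "hle (l + m) f g" and i: "i \<in> {1..m}"
    and vu: "shape_le (tseq l f i j) (tseq l g i j)"
  shows "tle (tseq l f i (Suc j)) (tseq l g i (Suc j))"
proof (cases "j = 0")
  case True
  then show ?thesis using fg i by (simp add: hle_def)
next
  case False
  have "idxT (tseq l f i j) = idxT (tseq l g i j)"
    using vu by (auto simp: shape_le_def idxT_def)
  moreover have "contL l (tseq l f i j) \<Longrightarrow> idxT (tseq l f i j) \<in> {1..l + m}"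
    using contL_idxT by fastforce
  ultimately show ?thesis
    using False fg vu shape_le_contL_iff[OF vu] shape_le_imp_tle by (auto simp: hle_def)
qed

lemma trace_at_mono:
  assumes fg: "hle (l + m) f g" and i: "i \<in> {1..m}"
  shows "tle (trace_at l f i) (trace_at l g i)"
proof -
  define v where "v = tseq l f i"
  define u where "u = tseq l g i"
  show ?thesis
  proof (cases "\<forall>j. shape_le (v j) (u j)")
    case True
    then show ?thesis
      unfolding trace_at_eq_trace_of_seq v_def[symmetric] u_def[symmetric]
      by (blast intro: trace_of_seq_mono)
  next
    case False
    define K where "K = (LEAST j. \<not> shape_le (v j) (u j))"
    have K: "\<not> shape_le (v K) (u K)"
      unfolding K_def by (rule LeastI_ex) (use False in blast)
    have before_K: "shape_le (v j) (u j)" if "j < K" for j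
      using that not_less_Least unfolding K_def by blast
    have "shape_le (v 0) (u 0)" by (simp add: v_def u_def shape_le_def)
    then obtain K' where K': "K = Suc K'"
      using K by (cases K) auto
    have "shape_le (tseq l f i K') (tseq l g i K')"
      using before_K[of K'] K' by (simp add: v_def u_def)
    then have "tle (v K) (u K)"
      using tle_tseq_Suc[OF fg i] K' by (simp add: v_def u_def)
    then have extremal: "v K = ExS \<or> u K = AllS"
      using K tle_cases by blast
    have running: "contL l (v j) \<and> contL l (u j)" if "1 \<le> j" "j < K" for j
      using tseq_contL_before_divergence[of j K l f i g] that before_K K
        shape_le_contL_iff[OF before_K] unfolding v_def u_def by blast
    show ?thesis
    proof (cases "v K = ExS")
      case True
      then have "trace_of_seq l v = ExS"
        using trace_of_seq_extremal[of K v l] K' running by simp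
      then show ?thesis by (simp add: trace_at_eq_trace_of_seq v_def)
    next
      case False
      then have "trace_of_seq l u = AllS"
        using trace_of_seq_extremal[of K u l] K' running extremal by simp
      then show ?thesis by (simp add: trace_at_eq_trace_of_seq u_def)
    qed
  qed
qed

lemma trace_op_mono: "hle (l + m) f g \<Longrightarrow> hle m (trace_op l f) (trace_op l g)"
  using trace_at_mono by (simp add: hle_def trace_op_def)

theorem propositionD3:
  shows
   "(\<forall>m l n f f' g g'. arrow m l f \<and> arrow m l f' \<and> arrow l n g \<and> arrow l n g' \<and>
        hle m f f' \<and> hle l g g' \<longrightarrow> hle m (seqc f g) (seqc f' g'))
    \<and> (\<forall>m n m' n' f f' g g'. arrow m n f \<and> arrow m n f' \<and> arrow m' n' g \<and> arrow m' n' g' \<and>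
        hle m f f' \<and> hle m' g g' \<longrightarrow> hle (m + m') (osum m n f g) (osum m n f' g'))
    \<and> (\<forall>l m n f g. arrow (l + m) (l + n) f \<and> arrow (l + m) (l + n) g \<and>
        hle (l + m) f g \<longrightarrow> hle m (trace_op l f) (trace_op l g))"
  using seqc_mono osum_mono trace_op_mono by blast

end
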